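(* Let $A$ be a ring, $\delta=(\delta_1,\ldots,\delta_n)$ an $n$-tuple of pairwise commuting derivations of $A$, $d_i\in\mathbb{N}\cup\{\infty\}$, $I=\{\alpha\in\mathbb{N}^n\mid\alpha_i\le d_i\ \forall i\}$, and suppose there are elements $y^{[\alpha]}\in N_\alpha$ ($\alpha\in I$) with $\delta^\alpha(y^{[\alpha]})=1$. Then: (1) there exists a unique $\delta$-descent $\{x^{[\alpha]}\mid\alpha\in I\}$ such that for each $0\neq\alpha\in I$, $x^{[\alpha]}=y^{[\alpha]}+\sum_{0\le\beta<\alpha}c_{\alpha\beta}y^{[\beta]}$ for some $c_{\alpha\beta}\in A^\delta$ with $c_{\alpha,0}=0$; (2) there exists a unique $\delta$-descent $\{z^{[\alpha]}\mid\alpha\in I\}$ such that for each $0\neq\alpha\in I$, $z^{[\alpha]}=y^{[\alpha]}+\sum_{0\le\beta<\alpha}y^{[\beta]}b_{\alpha\beta}$ for some $b_{\alpha\beta}\in A^\delta$ with $b_{\alpha,0}=0$.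
   Context: $A^\delta=\bigcap_i\ker\delta_i$; $N_\alpha=\bigcap_{i=1}^n\ker\delta_i^{\alpha_i+1}$; $\beta\le\alpha$ means $\beta_i\le\alpha_i$ for all $i$, and $\beta<\alpha$ means $\beta\le\alpha$, $\beta\neq\alpha$; $\delta^\alpha=\delta_1^{\alpha_1}\cdots\delta_n^{\alpha_n}$. A family $\{x^{[\alpha]}\mid\alpha\in I\}$ is a $\delta$-descent if $x^{[0]}=1$ and $\delta^\alpha(x^{[\beta]})=x^{[\beta-\alpha]}$ for all $\alpha\in\mathbb{N}^n$, $\beta\in I$, with $x^{[\gamma]}:=0$ for $\gamma\notin\mathbb{N}^n$. *)

theory Defs
  imports Main "HOL-Library.Extended_Nat"
begin

definition derivation :: "('a::ring_1 \<Rightarrow> 'a) \<Rightarrow> bool" where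
  "derivation D \<longleftrightarrow> (\<forall>x y. D (x + y) = D x + D y) \<and> (\<forall>x y. D (x * y) = D x * y + x * D y)"

text \<open>Multi-indices in N^n, represented as functions nat => nat vanishing from n on.\<close>
definition multi_idx :: "nat \<Rightarrow> (nat \<Rightarrow> nat) set" where
  "multi_idx n = {\<alpha>. \<forall>i\<ge>n. \<alpha> i = 0}"

definition idx_set :: "nat \<Rightarrow> (nat \<Rightarrow> enat) \<Rightarrow> (nat \<Rightarrow> nat) set" where
  "idx_set n d = {\<alpha> \<in> multi_idx n. \<forall>i<n. enat (\<alpha> i) \<le> d i}"

text \<open>delta^alpha = delta_1^alpha_1 ... delta_n^alpha_n (indices 0..n-1).\<close>
definition delta_pow :: "nat \<Rightarrow> (nat \<Rightarrow> 'a \<Rightarrow> 'a) \<Rightarrow> (nat \<Rightarrow> nat) \<Rightarrow> 'a \<Rightarrow> 'a" where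
  "delta_pow n \<delta> \<alpha> = foldr (\<lambda>i f. (\<delta> i ^^ \<alpha> i) \<circ> f) [0..<n] id"

definition const_ring :: "nat \<Rightarrow> (nat \<Rightarrow> 'a::zero \<Rightarrow> 'a) \<Rightarrow> 'a set" where
  "const_ring n \<delta> = {x. \<forall>i<n. \<delta> i x = 0}"

definition N_set :: "nat \<Rightarrow> (nat \<Rightarrow> 'a::zero \<Rightarrow> 'a) \<Rightarrow> (nat \<Rightarrow> nat) \<Rightarrow> 'a set" where
  "N_set n \<delta> \<alpha> = {x. \<forall>i<n. (\<delta> i ^^ (\<alpha> i + 1)) x = 0}"

text \<open>A family x indexed by I (values outside I irrelevant) is a delta-descent.
  x^[gamma] := 0 for gamma not in N^n, i.e. when beta - alpha has a negative entry.\<close>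
definition descent :: "nat \<Rightarrow> (nat \<Rightarrow> 'a::ring_1 \<Rightarrow> 'a) \<Rightarrow> (nat \<Rightarrow> nat) set \<Rightarrow> ((nat \<Rightarrow> nat) \<Rightarrow> 'a) \<Rightarrow> bool" where
  "descent n \<delta> I x \<longleftrightarrow> x (\<lambda>_. 0) = 1 \<and>
     (\<forall>\<alpha>\<in>multi_idx n. \<forall>\<beta>\<in>I.
        delta_pow n \<delta> \<alpha> (x \<beta>) = (if \<alpha> \<le> \<beta> then x (\<lambda>i. \<beta> i - \<alpha> i) else 0))"

end

theory Submission
  imports Defs "HOL-Library.Function_Algebras"
begin

text \<open>
  The descent is built by induction on the degree \<open>|\<alpha>| = \<alpha>\<^sub>1 + \<dots> + \<alpha>\<^sub>n\<close>. Given
  \<open>x\<^sup>[\<beta>]\<close> for \<open>|\<beta>| < |\<alpha>|\<close>, start from \<open>v = y\<^sup>[\<alpha>]\<close> and correct it degree by degree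
  downwards: if \<open>\<delta>\<^sup>\<gamma> v = x\<^sup>[\<alpha>-\<gamma>]\<close> already holds for all \<open>|\<gamma>| > j\<close>, then for \<open>|\<gamma>| = j + 1\<close>
  the discrepancy \<open>e\<^sub>\<gamma> = \<delta>\<^sup>\<gamma> v - x\<^sup>[\<alpha>-\<gamma>]\<close> is killed by every \<open>\<delta>\<^sub>i\<close> (apply the hypothesis at
  \<open>\<gamma> + e\<^sub>i\<close>), so it is a constant, and \<open>v - \<Sum> e\<^sub>\<gamma> x\<^sup>[\<gamma>]\<close> satisfies the identities at degree
  \<open>j + 1\<close> without disturbing the higher ones. For uniqueness, the difference of two
  candidates is a constant combination of the \<open>y\<^sup>[\<beta>]\<close>, \<open>0 < \<beta> < \<alpha>\<close>, annihilated by every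
  \<open>\<delta>\<^sup>\<gamma>\<close>, \<open>\<gamma> \<noteq> 0\<close>; applying \<open>\<delta>\<^sup>\<beta>\<close> for a maximal \<open>\<beta>\<close> with nonzero coefficient isolates that
  coefficient. Parts (1) and (2) are the same argument for constants acting from the left
  and from the right.
\<close>

section \<open>Multi-indices\<close>

definition idx_degree :: "nat \<Rightarrow> (nat \<Rightarrow> nat) \<Rightarrow> nat" where
  "idx_degree n \<alpha> = (\<Sum>i<n. \<alpha> i)"

lemma multi_idx_downward_closed: "\<alpha> \<in> multi_idx n \<Longrightarrow> \<beta> \<le> \<alpha> \<Longrightarrow> \<beta> \<in> multi_idx n"
  by (auto simp: multi_idx_def le_fun_def) (metis le_zero_eq)

lemma idx_set_downward_closed: "\<alpha> \<in> idx_set n d \<Longrightarrow> \<beta> \<le> \<alpha> \<Longrightarrow> \<beta> \<in> idx_set n d"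
  unfolding idx_set_def using multi_idx_downward_closed
  by (auto simp: le_fun_def) (meson enat_ord_simps(1) order_trans)

lemma idx_set_diff: "\<alpha> \<in> idx_set n d \<Longrightarrow> \<alpha> - \<gamma> \<in> idx_set n d"
  by (erule idx_set_downward_closed) (simp add: le_fun_def)

lemma zero_in_idx_set: "0 \<in> idx_set n d"
  by (simp add: idx_set_def multi_idx_def zero_enat_def[symmetric])

lemma not_le_multi_idx: "\<beta> \<in> multi_idx n \<Longrightarrow> \<not> \<beta> \<le> \<alpha> \<Longrightarrow> \<exists>i<n. \<alpha> i < \<beta> i"
  by (auto simp: multi_idx_def le_fun_def not_le) (metis not_less_zero not_le)

lemma finite_multi_idx_le: "\<alpha> \<in> multi_idx n \<Longrightarrow> finite {\<beta>. \<beta> \<le> \<alpha>}"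
proof -
  assume \<alpha>: "\<alpha> \<in> multi_idx n"
  have "{\<beta>. \<beta> \<le> \<alpha>} \<subseteq>
      {\<beta>. \<forall>i. (i \<in> {..<n} \<longrightarrow> \<beta> i \<in> {..idx_degree n \<alpha>}) \<and> (i \<notin> {..<n} \<longrightarrow> \<beta> i = 0)}"
  proof clarsimp
    fix \<beta> :: "nat \<Rightarrow> nat" and i assume "\<beta> \<le> \<alpha>"
    then have "\<beta> i \<le> \<alpha> i" by (simp add: le_fun_def)
    moreover have "i < n \<Longrightarrow> \<alpha> i \<le> idx_degree n \<alpha>"
      unfolding idx_degree_def by (rule member_le_sum) auto
    moreover have "\<not> i < n \<Longrightarrow> \<alpha> i = 0"
      using \<alpha> by (simp add: multi_idx_def)
    ultimately show "(i < n \<longrightarrow> \<beta> i \<le> idx_degree n \<alpha>) \<and> (\<not> i < n \<longrightarrow> \<beta> i = 0)"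
      by auto
  qed
  moreover have "finite \<dots>"
    by (rule finite_set_of_finite_funs) auto
  ultimately show ?thesis
    by (rule finite_subset)
qed

lemma finite_multi_idx_less: "\<alpha> \<in> multi_idx n \<Longrightarrow> finite {\<beta>. \<beta> < \<alpha>}"
  by (rule finite_subset[OF _ finite_multi_idx_le]) auto

lemma idx_degree_mono: "\<beta> \<le> \<alpha> \<Longrightarrow> idx_degree n \<beta> \<le> idx_degree n \<alpha>"
  unfolding idx_degree_def by (intro sum_mono) (simp add: le_fun_def)

lemma idx_degree_strict_mono: "\<alpha> \<in> multi_idx n \<Longrightarrow> \<beta> < \<alpha> \<Longrightarrow> idx_degree n \<beta> < idx_degree n \<alpha>"
proof -
  assume "\<alpha> \<in> multi_idx n" and less: "\<beta> < \<alpha>"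
  then obtain i where "i < n" "\<beta> i < \<alpha> i"
    using not_le_multi_idx[of \<alpha> n \<beta>] by (meson less_le_not_le)
  moreover have "\<forall>j\<in>{..<n}. \<beta> j \<le> \<alpha> j"
    using order_less_imp_le[OF less] by (simp add: le_fun_def)
  ultimately show ?thesis
    unfolding idx_degree_def by (intro sum_strict_mono_ex1[OF finite_lessThan]) auto
qed

lemma idx_degree_le_imp_eq:
  "\<alpha> \<in> multi_idx n \<Longrightarrow> \<beta> \<le> \<alpha> \<Longrightarrow> idx_degree n \<alpha> \<le> idx_degree n \<beta> \<Longrightarrow> \<beta> = \<alpha>"
  using idx_degree_strict_mono[of \<alpha> n \<beta>] by (metis order_less_le not_le)

lemma idx_degree_zero [simp]: "idx_degree n 0 = 0"
  by (simp add: idx_degree_def)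

lemma idx_degree_diff: "\<gamma> \<le> \<alpha> \<Longrightarrow> idx_degree n (\<alpha> - \<gamma>) = idx_degree n \<alpha> - idx_degree n \<gamma>"
  unfolding idx_degree_def by (simp add: sum_subtractf_nat le_fun_def)

lemma idx_degree_pos: "\<gamma> \<in> multi_idx n \<Longrightarrow> \<gamma> \<noteq> 0 \<Longrightarrow> 0 < idx_degree n \<gamma>"
  using idx_degree_strict_mono[of \<gamma> n 0]
  by (simp add: order.not_eq_order_implies_strict le_fun_def)

lemma idx_degree_diff_less:
  "\<alpha> \<in> multi_idx n \<Longrightarrow> \<gamma> \<le> \<alpha> \<Longrightarrow> \<gamma> \<noteq> 0 \<Longrightarrow> idx_degree n (\<alpha> - \<gamma>) < idx_degree n \<alpha>"
  using idx_degree_pos[of \<gamma> n] idx_degree_mono[of \<gamma> \<alpha> n] multi_idx_downward_closed[of \<alpha> n \<gamma>]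
  by (simp add: idx_degree_diff)

lemma idx_degree_add_unit: "i < n \<Longrightarrow> idx_degree n (0(i := 1) + \<gamma>) = Suc (idx_degree n \<gamma>)"
  by (simp add: idx_degree_def sum.distrib zero_fun_def)


section \<open>Iterated derivations\<close>

lemma delta_pow_0 [simp]: "delta_pow 0 \<delta> \<alpha> = id"
  by (simp add: delta_pow_def)

lemma delta_pow_Suc: "delta_pow (Suc n) \<delta> \<alpha> = delta_pow n \<delta> \<alpha> \<circ> (\<delta> n ^^ \<alpha> n)"
proof -
  have "foldr (\<lambda>i f. (\<delta> i ^^ \<alpha> i) \<circ> f) xs g = foldr (\<lambda>i f. (\<delta> i ^^ \<alpha> i) \<circ> f) xs id \<circ> g" for xs g
    by (induction xs) (simp_all add: comp_assoc)
  then show ?thesis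
    by (simp add: delta_pow_def)
qed

lemma delta_pow_cong: "(\<And>i. i < n \<Longrightarrow> \<alpha> i = \<beta> i) \<Longrightarrow> delta_pow n \<delta> \<alpha> = delta_pow n \<delta> \<beta>"
  by (induction n) (simp_all add: delta_pow_Suc)

lemma delta_pow_zero_idx [simp]: "delta_pow n \<delta> 0 = id"
  by (induction n) (simp_all add: delta_pow_Suc)

lemma delta_pow_unit: "i < n \<Longrightarrow> delta_pow n \<delta> (0(i := k)) = \<delta> i ^^ k"
proof (induction n)
  case (Suc n)
  show ?case
  proof (cases "i = n")
    case True
    have "delta_pow n \<delta> (0(i := k)) = delta_pow n \<delta> 0"
      using True by (intro delta_pow_cong) simp
    then show ?thesis
      using True by (simp only: delta_pow_Suc fun_upd_same delta_pow_zero_idx id_comp)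
  next
    case False
    with Suc show ?thesis
      by (simp add: delta_pow_Suc)
  qed
qed simp

lemma additive_funpow:
  fixes f :: "'a::ab_group_add \<Rightarrow> 'a"
  shows "additive f \<Longrightarrow> additive (f ^^ k)"
  by (induction k) (simp_all add: additive_def)

lemma additive_delta_pow: "(\<And>i. i < n \<Longrightarrow> additive (\<delta> i)) \<Longrightarrow> additive (delta_pow n \<delta> \<alpha>)"
proof (induction n)
  case (Suc n)
  then have "additive (delta_pow n \<delta> \<alpha>)" "additive (\<delta> n ^^ \<alpha> n)"
    by (simp_all add: additive_funpow)
  then show ?case
    by (simp add: delta_pow_Suc additive_def)
qed (simp add: additive_def)

lemma funpow_commute: "(\<And>x. f (g x) = g (f x)) \<Longrightarrow> (f ^^ k) (g x) = g ((f ^^ k) x)"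
  by (induction k) simp_all

lemma delta_pow_commute:
  "(\<And>i x. i < n \<Longrightarrow> \<delta> i (g x) = g (\<delta> i x)) \<Longrightarrow> delta_pow n \<delta> \<alpha> (g x) = g (delta_pow n \<delta> \<alpha> x)"
  by (induction n arbitrary: x) (simp_all add: delta_pow_Suc funpow_commute)

lemma delta_pow_add:
  assumes "\<And>i j. i < n \<Longrightarrow> j < n \<Longrightarrow> \<delta> i \<circ> \<delta> j = \<delta> j \<circ> \<delta> i"
  shows "delta_pow n \<delta> (\<alpha> + \<beta>) = delta_pow n \<delta> \<alpha> \<circ> delta_pow n \<delta> \<beta>"
  using assms
proof (induction n)
  case (Suc n)
  have "\<delta> i ((\<delta> n ^^ \<alpha> n) x) = (\<delta> n ^^ \<alpha> n) (\<delta> i x)" if "i < n" for i x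
  proof -
    have "\<delta> n (\<delta> i x) = \<delta> i (\<delta> n x)" for x
      using Suc.prems[of n i] that by (simp add: fun_eq_iff)
    then show ?thesis
      by (rule funpow_commute[symmetric])
  qed
  then have swap: "delta_pow n \<delta> \<beta> ((\<delta> n ^^ \<alpha> n) x) = (\<delta> n ^^ \<alpha> n) (delta_pow n \<delta> \<beta> x)" for x
    by (rule delta_pow_commute)
  have IH: "delta_pow n \<delta> (\<alpha> + \<beta>) = delta_pow n \<delta> \<alpha> \<circ> delta_pow n \<delta> \<beta>"
    by (intro Suc.IH Suc.prems) auto
  show ?case
    using IH by (simp add: fun_eq_iff delta_pow_Suc funpow_add swap plus_fun_def)
qed simp

lemma derivation_additive: "derivation D \<Longrightarrow> additive D"
  by (simp add: derivation_def additive_def)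

lemma derivation_one: "derivation D \<Longrightarrow> D 1 = 0"
  unfolding derivation_def by (metis add_cancel_right_right mult_1 mult_1_right)

lemma derivation_mult_const_left: "derivation D \<Longrightarrow> D c = 0 \<Longrightarrow> D (c * a) = c * D a"
  by (simp add: derivation_def)

lemma derivation_mult_const_right: "derivation D \<Longrightarrow> D c = 0 \<Longrightarrow> D (a * c) = D a * c"
  by (simp add: derivation_def)

locale commuting_derivations =
  fixes n :: nat and \<delta> :: "nat \<Rightarrow> 'a::ring_1 \<Rightarrow> 'a"
  assumes derivation: "i < n \<Longrightarrow> derivation (\<delta> i)"
    and commute: "i < n \<Longrightarrow> j < n \<Longrightarrow> \<delta> i \<circ> \<delta> j = \<delta> j \<circ> \<delta> i"
begin

abbreviation D :: "(nat \<Rightarrow> nat) \<Rightarrow> 'a \<Rightarrow> 'a" where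
  "D \<equiv> delta_pow n \<delta>"

abbreviation K :: "'a set" where
  "K \<equiv> const_ring n \<delta>"

lemma additive_D: "additive (D \<alpha>)"
  by (intro additive_delta_pow derivation_additive derivation)

lemmas D_add = additive.add[OF additive_D]
  and D_diff = additive.diff[OF additive_D]
  and D_zero = additive.zero[OF additive_D]
  and D_sum = additive.sum[OF additive_D]

lemma D_add_idx: "D (\<alpha> + \<beta>) = D \<alpha> \<circ> D \<beta>"
  by (intro delta_pow_add commute)

lemma D_unit: "i < n \<Longrightarrow> D (0(i := 1)) = \<delta> i"
  by (simp add: delta_pow_unit)

lemma D_vanishes_on_N_set:
  assumes a: "a \<in> N_set n \<delta> \<beta>" and i: "i < n" "\<beta> i < \<gamma> i"
  shows "D \<gamma> a = 0"
proof -
  obtain m where "\<gamma> i = m + Suc (\<beta> i)"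
    using i(2) by (intro that[of "\<gamma> i - Suc (\<beta> i)"]) simp
  then have "(\<delta> i ^^ \<gamma> i) a = (\<delta> i ^^ m) ((\<delta> i ^^ Suc (\<beta> i)) a)"
    by (simp only: funpow_add comp_apply)
  also have "\<dots> = 0"
    using a i additive.zero[OF additive_funpow[OF derivation_additive[OF derivation]]]
    by (simp add: N_set_def)
  finally have "(\<delta> i ^^ \<gamma> i) a = 0" .
  moreover have "\<gamma> = \<gamma>(i := 0) + 0(i := \<gamma> i)"
    by (simp add: fun_eq_iff)
  ultimately show ?thesis
    using D_add_idx[of "\<gamma>(i := 0)" "0(i := \<gamma> i)"] D_zero i
    by (simp add: delta_pow_unit)
qed

lemma const_zero: "0 \<in> K"
  by (simp add: const_ring_def derivation derivation_additive additive.zero)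

lemma const_one: "1 \<in> K"
  by (simp add: const_ring_def derivation derivation_one)

lemma const_add: "c \<in> K \<Longrightarrow> c' \<in> K \<Longrightarrow> c + c' \<in> K"
  by (simp add: const_ring_def derivation derivation_additive additive.add)

lemma const_diff: "c \<in> K \<Longrightarrow> c' \<in> K \<Longrightarrow> c - c' \<in> K"
  by (simp add: const_ring_def derivation derivation_additive additive.diff)

lemma const_mult: "c \<in> K \<Longrightarrow> c' \<in> K \<Longrightarrow> c * c' \<in> K"
  by (simp add: const_ring_def derivation derivation_mult_const_left)

end

section \<open>Unitriangular descents\<close>

lemma descent_iff:
  "descent n \<delta> I x \<longleftrightarrow> x 0 = 1 \<and>
     (\<forall>\<gamma>\<in>multi_idx n. \<forall>\<beta>\<in>I. delta_pow n \<delta> \<gamma> (x \<beta>) = (if \<gamma> \<le> \<beta> then x (\<beta> - \<gamma>) else 0))"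
  by (simp add: descent_def zero_fun_def fun_diff_def)

text \<open>
  \<open>act c a\<close> is the action of a constant \<open>c\<close> on \<open>a\<close>, i.e.\ \<open>c * a\<close> for part (1) and \<open>a * c\<close> for
  part (2); \<open>cmult\<close> is the multiplication of constants matching composition of actions.
\<close>

locale descent_data = commuting_derivations n \<delta> for n and \<delta> :: "nat \<Rightarrow> 'a::ring_1 \<Rightarrow> 'a" +
  fixes d :: "nat \<Rightarrow> enat" and y :: "(nat \<Rightarrow> nat) \<Rightarrow> 'a"
    and act :: "'a \<Rightarrow> 'a \<Rightarrow> 'a" and cmult :: "'a \<Rightarrow> 'a \<Rightarrow> 'a"
  assumes y_N_set: "\<alpha> \<in> idx_set n d \<Longrightarrow> y \<alpha> \<in> N_set n \<delta> \<alpha>"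
    and D_y: "\<alpha> \<in> idx_set n d \<Longrightarrow> D \<alpha> (y \<alpha>) = 1"
    and act_add_left: "act (c + c') a = act c a + act c' a"
    and act_add_right: "act c (a + b) = act c a + act c b"
    and act_one_left: "act 1 a = a"
    and act_one_right: "act c 1 = c"
    and act_act: "act c (act c' a) = act (cmult c c') a"
    and cmult_const: "c \<in> K \<Longrightarrow> c' \<in> K \<Longrightarrow> cmult c c' \<in> K"
    and cmult_zero: "cmult c 0 = 0"
    and delta_act: "c \<in> K \<Longrightarrow> i < n \<Longrightarrow> \<delta> i (act c a) = act c (\<delta> i a)"
begin

abbreviation I :: "(nat \<Rightarrow> nat) set" where
  "I \<equiv> idx_set n d"

abbreviation M :: "(nat \<Rightarrow> nat) set" where
  "M \<equiv> multi_idx n"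

lemma act_zero_left [simp]: "act 0 a = 0"
  using act_add_left[of 0 0 a] by simp

lemma act_diff_left: "act (c - c') a = act c a - act c' a"
  using act_add_left[of "c - c'" c' a] by (simp add: algebra_simps)

lemma additive_act: "additive (act c)"
  by (simp add: additive_def act_add_right)

lemma act_zero_right [simp]: "act c 0 = 0"
  by (rule additive.zero[OF additive_act])

lemma D_act: "c \<in> K \<Longrightarrow> D \<gamma> (act c a) = act c (D \<gamma> a)"
  by (rule delta_pow_commute) (simp add: delta_act)

lemma D_y_vanishes: "\<beta> \<in> I \<Longrightarrow> \<gamma> \<in> M \<Longrightarrow> \<not> \<gamma> \<le> \<beta> \<Longrightarrow> D \<gamma> (y \<beta>) = 0"
  using not_le_multi_idx D_vanishes_on_N_set y_N_set by metis

lemma y_zero: "y 0 = 1"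
  using D_y[OF zero_in_idx_set] by simp

definition lower_comb :: "(nat \<Rightarrow> nat) \<Rightarrow> 'a \<Rightarrow> bool" where
  "lower_comb \<alpha> s \<longleftrightarrow> (\<exists>c. (\<forall>\<beta>. c \<beta> \<in> K) \<and> c 0 = 0 \<and> s = (\<Sum>\<beta> | \<beta> < \<alpha>. act (c \<beta>) (y \<beta>)))"

definition unitriangular :: "(nat \<Rightarrow> nat) \<Rightarrow> 'a \<Rightarrow> bool" where
  "unitriangular \<alpha> v \<longleftrightarrow> (\<exists>s. lower_comb \<alpha> s \<and> v = y \<alpha> + s)"

lemma unitriangular_iff:
  "unitriangular \<alpha> v \<longleftrightarrow>
     (\<exists>c. (\<forall>\<beta>. c \<beta> \<in> K) \<and> c 0 = 0 \<and> v = y \<alpha> + (\<Sum>\<beta> | \<beta> < \<alpha>. act (c \<beta>) (y \<beta>)))"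
  by (auto simp: unitriangular_def lower_comb_def)

lemma lower_comb_zero: "lower_comb \<alpha> 0"
  unfolding lower_comb_def by (intro exI[of _ "\<lambda>_. 0"]) (simp add: const_zero)

lemma lower_comb_add: "lower_comb \<alpha> s \<Longrightarrow> lower_comb \<alpha> t \<Longrightarrow> lower_comb \<alpha> (s + t)"
  unfolding lower_comb_def
  by (elim exE, rename_tac c c', rule_tac x = "\<lambda>\<beta>. c \<beta> + c' \<beta>" in exI)
     (simp add: const_add act_add_left sum.distrib)

lemma lower_comb_diff: "lower_comb \<alpha> s \<Longrightarrow> lower_comb \<alpha> t \<Longrightarrow> lower_comb \<alpha> (s - t)"
  unfolding lower_comb_def
  by (elim exE, rename_tac c c', rule_tac x = "\<lambda>\<beta>. c \<beta> - c' \<beta>" in exI)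
     (simp add: const_diff act_diff_left sum_subtractf)

lemma lower_comb_act: "c \<in> K \<Longrightarrow> lower_comb \<alpha> s \<Longrightarrow> lower_comb \<alpha> (act c s)"
  unfolding lower_comb_def
  by (elim exE, rename_tac c', rule_tac x = "\<lambda>\<beta>. cmult c (c' \<beta>)" in exI)
     (simp add: cmult_const cmult_zero act_act additive.sum[OF additive_act])

lemma lower_comb_sum: "(\<And>\<gamma>. \<gamma> \<in> A \<Longrightarrow> lower_comb \<alpha> (f \<gamma>)) \<Longrightarrow> lower_comb \<alpha> (sum f A)"
  by (induction A rule: infinite_finite_induct) (simp_all add: lower_comb_zero lower_comb_add)

lemma lower_comb_mono:
  assumes "\<alpha> \<in> M" "\<beta> \<le> \<alpha>" "lower_comb \<beta> s"
  shows "lower_comb \<alpha> s"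
proof -
  obtain c where c: "\<forall>\<gamma>. c \<gamma> \<in> K" "c 0 = 0" and s: "s = (\<Sum>\<gamma> | \<gamma> < \<beta>. act (c \<gamma>) (y \<gamma>))"
    using assms(3) unfolding lower_comb_def by blast
  define c' where "c' \<gamma> = (if \<gamma> < \<beta> then c \<gamma> else 0)" for \<gamma>
  have "{\<gamma>. \<gamma> < \<beta>} \<subseteq> {\<gamma>. \<gamma> < \<alpha>}"
    using assms(2) by auto
  then have "(\<Sum>\<gamma> | \<gamma> < \<alpha>. act (c' \<gamma>) (y \<gamma>)) = (\<Sum>\<gamma> | \<gamma> < \<beta>. act (c' \<gamma>) (y \<gamma>))"
    by (intro sum.mono_neutral_right finite_multi_idx_less[OF assms(1)]) (auto simp: c'_def)
  also have "\<dots> = s"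
    by (simp add: s c'_def)
  finally show ?thesis
    unfolding lower_comb_def using c const_zero by (intro exI[of _ c']) (auto simp: c'_def)
qed

lemma lower_comb_y:
  assumes "\<alpha> \<in> M" "\<beta> < \<alpha>" "\<beta> \<noteq> 0"
  shows "lower_comb \<alpha> (y \<beta>)"
proof -
  have "(\<Sum>\<gamma> | \<gamma> < \<alpha>. act (if \<gamma> = \<beta> then 1 else 0) (y \<gamma>)) = y \<beta>"
    using assms by (simp add: if_distrib[of "\<lambda>c. act c _"] act_one_left finite_multi_idx_less cong: if_cong)
  then show ?thesis
    unfolding lower_comb_def using assms(3) const_zero const_one
    by (intro exI[of _ "\<lambda>\<gamma>. if \<gamma> = \<beta> then 1 else 0"]) auto
qed

lemma unitriangular_lower_comb:
  "\<alpha> \<in> M \<Longrightarrow> \<beta> < \<alpha> \<Longrightarrow> \<beta> \<noteq> 0 \<Longrightarrow> unitriangular \<beta> v \<Longrightarrow> lower_comb \<alpha> v"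
  unfolding unitriangular_def
  by (auto intro: lower_comb_add lower_comb_y lower_comb_mono order_less_imp_le)

lemma lower_comb_zero_idx: "lower_comb 0 s \<longleftrightarrow> s = 0"
proof -
  have "{\<beta>. \<beta> < (0::nat \<Rightarrow> nat)} = {}"
    by (auto simp: less_fun_def le_fun_def)
  then show ?thesis
    by (auto simp: lower_comb_def intro: exI[of _ "\<lambda>_. 0"] const_zero)
qed

lemma unitriangular_zero_idx: "unitriangular 0 v \<longleftrightarrow> v = 1"
  by (simp add: unitriangular_def lower_comb_zero_idx y_zero)

lemma D_lower_comb:
  assumes "\<alpha> \<in> I" "\<gamma> \<in> M" "\<not> \<gamma> < \<alpha>" "lower_comb \<alpha> s"
  shows "D \<gamma> s = 0"
proof -
  obtain c where c: "\<forall>\<beta>. c \<beta> \<in> K" and s: "s = (\<Sum>\<beta> | \<beta> < \<alpha>. act (c \<beta>) (y \<beta>))"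
    using assms(4) unfolding lower_comb_def by blast
  have "D \<gamma> (y \<beta>) = 0" if "\<beta> < \<alpha>" for \<beta>
  proof (rule D_y_vanishes)
    show "\<beta> \<in> I"
      using idx_set_downward_closed[OF assms(1)] that by (simp add: order_less_imp_le)
    show "\<not> \<gamma> \<le> \<beta>"
      using assms(3) that by (auto intro: order_le_less_trans)
  qed (fact assms(2))
  then show ?thesis
    by (simp add: s D_sum D_act c)
qed

lemma D_unitriangular_not_le:
  "\<alpha> \<in> I \<Longrightarrow> \<gamma> \<in> M \<Longrightarrow> \<not> \<gamma> \<le> \<alpha> \<Longrightarrow> unitriangular \<alpha> v \<Longrightarrow> D \<gamma> v = 0"
  unfolding unitriangular_def using D_lower_comb D_y_vanishes
  by (auto simp: D_add order_less_imp_le)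

lemma D_unitriangular_self: "\<alpha> \<in> I \<Longrightarrow> unitriangular \<alpha> v \<Longrightarrow> D \<alpha> v = 1"
  unfolding unitriangular_def using D_lower_comb D_y idx_set_def
  by (auto simp: D_add)

lemma lower_comb_eq_0:
  assumes \<alpha>: "\<alpha> \<in> I" and s: "lower_comb \<alpha> s"
    and D_s: "\<And>\<gamma>. \<gamma> \<le> \<alpha> \<Longrightarrow> \<gamma> \<noteq> 0 \<Longrightarrow> D \<gamma> s = 0"
  shows "s = 0"
proof -
  obtain c where c: "\<forall>\<beta>. c \<beta> \<in> K" "c 0 = 0" and s_eq: "s = (\<Sum>\<beta> | \<beta> < \<alpha>. act (c \<beta>) (y \<beta>))"
    using s unfolding lower_comb_def by blast
  have fin: "finite {\<beta>. \<beta> < \<alpha>}"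
    using \<alpha> finite_multi_idx_less[of \<alpha> n] by (simp add: idx_set_def)
  have "c \<beta> = 0" if "\<beta> < \<alpha>" for \<beta>
  proof (rule ccontr)
    assume "c \<beta> \<noteq> 0"
    define S where "S = {\<beta>. \<beta> < \<alpha> \<and> c \<beta> \<noteq> 0}"
    have "finite S" "S \<noteq> {}"
      using fin \<open>\<beta> < \<alpha>\<close> \<open>c \<beta> \<noteq> 0\<close> by (auto simp: S_def intro: finite_subset)
    then obtain \<beta>0 where \<beta>0: "\<beta>0 \<in> S" and max: "\<And>\<beta>. \<beta> \<in> S \<Longrightarrow> \<beta>0 \<le> \<beta> \<Longrightarrow> \<beta>0 = \<beta>"
      using finite_has_maximal by metis
    have \<beta>0_idx: "\<beta>0 \<in> I"
      using \<beta>0 \<alpha> idx_set_downward_closed by (auto simp: S_def order_less_imp_le)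
    have "act (c \<beta>) (D \<beta>0 (y \<beta>)) = (if \<beta> = \<beta>0 then c \<beta>0 else 0)" if "\<beta> < \<alpha>" for \<beta>
    proof (cases "\<beta> = \<beta>0 \<or> c \<beta> = 0")
      case True
      then show ?thesis
        using D_y[OF \<beta>0_idx] \<beta>0 by (auto simp: S_def act_one_right)
    next
      case False
      then have "\<not> \<beta>0 \<le> \<beta>"
        using max that by (auto simp: S_def)
      moreover have "\<beta> \<in> I"
        using that \<alpha> idx_set_downward_closed by (simp add: order_less_imp_le)
      ultimately show ?thesis
        using False \<beta>0_idx D_y_vanishes by (simp add: idx_set_def)
    qed
    then have "D \<beta>0 s = c \<beta>0"
      using \<beta>0 fin by (simp add: s_eq D_sum D_act c S_def)
    moreover have "D \<beta>0 s = 0"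
      using \<beta>0 c(2) by (intro D_s) (auto simp: S_def order_less_imp_le)
    ultimately show False
      using \<beta>0 by (simp add: S_def)
  qed
  then show ?thesis
    by (simp add: s_eq)
qed

definition compatible_above :: "((nat \<Rightarrow> nat) \<Rightarrow> 'a) \<Rightarrow> (nat \<Rightarrow> nat) \<Rightarrow> nat \<Rightarrow> 'a \<Rightarrow> bool" where
  "compatible_above x \<alpha> j v \<longleftrightarrow> (\<forall>\<gamma>\<le>\<alpha>. \<gamma> \<noteq> 0 \<longrightarrow> j < idx_degree n \<gamma> \<longrightarrow> D \<gamma> v = x (\<alpha> - \<gamma>))"

lemma compatible_above_cong:
  "(\<And>\<gamma>. \<gamma> \<le> \<alpha> \<Longrightarrow> \<gamma> \<noteq> 0 \<Longrightarrow> x (\<alpha> - \<gamma>) = x' (\<alpha> - \<gamma>)) \<Longrightarrow>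
    compatible_above x \<alpha> j v \<longleftrightarrow> compatible_above x' \<alpha> j v"
  by (auto simp: compatible_above_def)

text \<open>Since \<open>y 0 = 1\<close>, unitriangularity at \<open>\<alpha> = 0\<close> forces \<open>x 0 = 1\<close>.\<close>

definition partial_descent :: "nat \<Rightarrow> ((nat \<Rightarrow> nat) \<Rightarrow> 'a) \<Rightarrow> bool" where
  "partial_descent k x \<longleftrightarrow>
     (\<forall>\<alpha>\<in>I. idx_degree n \<alpha> < k \<longrightarrow> unitriangular \<alpha> (x \<alpha>) \<and> compatible_above x \<alpha> 0 (x \<alpha>))"

lemma partial_descent_zero_idx: "partial_descent k x \<Longrightarrow> 0 < k \<Longrightarrow> x 0 = 1"
  unfolding partial_descent_def using zero_in_idx_set by (metis idx_degree_zero unitriangular_zero_idx)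

lemma partial_descent_D:
  assumes x: "partial_descent k x" and \<alpha>: "\<alpha> \<in> I" "idx_degree n \<alpha> < k" and \<gamma>: "\<gamma> \<in> M"
  shows "D \<gamma> (x \<alpha>) = (if \<gamma> \<le> \<alpha> then x (\<alpha> - \<gamma>) else 0)"
proof -
  have v: "unitriangular \<alpha> (x \<alpha>)" and compat: "compatible_above x \<alpha> 0 (x \<alpha>)"
    using x \<alpha> by (simp_all add: partial_descent_def)
  consider "\<gamma> = 0" | "\<gamma> \<le> \<alpha>" "\<gamma> \<noteq> 0" | "\<not> \<gamma> \<le> \<alpha>"
    by blast
  then show ?thesis
  proof cases
    case 1
    then show ?thesis
      by (simp add: le_fun_def)
  next
    case 2
    then show ?thesis
      using compat idx_degree_pos[OF \<gamma>] by (simp add: compatible_above_def)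
  next
    case 3
    then show ?thesis
      using D_unitriangular_not_le[OF \<alpha>(1) \<gamma> _ v] by simp
  qed
qed

lemma partial_descent_unique:
  assumes x: "partial_descent k x" and x': "partial_descent k' x'"
  shows "\<alpha> \<in> I \<Longrightarrow> idx_degree n \<alpha> < k \<Longrightarrow> idx_degree n \<alpha> < k' \<Longrightarrow> x \<alpha> = x' \<alpha>"
proof (induction "idx_degree n \<alpha>" arbitrary: \<alpha> rule: less_induct)
  case less
  have "unitriangular \<alpha> (x \<alpha>)" "unitriangular \<alpha> (x' \<alpha>)"
    using x x' less.prems by (simp_all add: partial_descent_def)
  then obtain s s' where s: "lower_comb \<alpha> s" "x \<alpha> = y \<alpha> + s" and s': "lower_comb \<alpha> s'" "x' \<alpha> = y \<alpha> + s'"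
    unfolding unitriangular_def by blast
  have "s - s' = 0"
  proof (rule lower_comb_eq_0[OF less.prems(1) lower_comb_diff[OF s(1) s'(1)]])
    fix \<gamma> assume \<gamma>: "\<gamma> \<le> \<alpha>" "\<gamma> \<noteq> 0"
    have \<alpha>_multi_idx: "\<alpha> \<in> M"
      using less.prems(1) by (simp add: idx_set_def)
    then have \<gamma>_multi_idx: "\<gamma> \<in> M"
      using \<gamma>(1) by (rule multi_idx_downward_closed)
    have "idx_degree n (\<alpha> - \<gamma>) < idx_degree n \<alpha>"
      using \<alpha>_multi_idx \<gamma> by (rule idx_degree_diff_less)
    then have "x (\<alpha> - \<gamma>) = x' (\<alpha> - \<gamma>)"
      using less idx_set_diff by simp
    then have "D \<gamma> (x \<alpha>) = D \<gamma> (x' \<alpha>)"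
      using partial_descent_D[OF x less.prems(1,2) \<gamma>_multi_idx]
        partial_descent_D[OF x' less.prems(1,3) \<gamma>_multi_idx] \<gamma>(1) by simp
    then show "D \<gamma> (s - s') = 0"
      using s(2) s'(2) by (simp add: D_add D_diff)
  qed
  then show ?case
    using s(2) s'(2) by simp
qed

definition lower_level :: "(nat \<Rightarrow> nat) \<Rightarrow> nat \<Rightarrow> (nat \<Rightarrow> nat) set" where
  "lower_level \<alpha> j = {\<gamma>. \<gamma> < \<alpha> \<and> idx_degree n \<gamma> = j}"

context
  fixes k :: nat and x :: "(nat \<Rightarrow> nat) \<Rightarrow> 'a" and \<alpha> :: "nat \<Rightarrow> nat"
  assumes x: "partial_descent k x" and \<alpha>: "\<alpha> \<in> I" and deg_\<alpha>: "idx_degree n \<alpha> = k"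
begin

lemma multi_idx_\<alpha>: "\<alpha> \<in> M"
  using \<alpha> by (simp add: idx_set_def)

lemma partial_descent_below:
  assumes "\<gamma> \<le> \<alpha>" "\<gamma> \<noteq> 0"
  shows "\<alpha> - \<gamma> \<in> I" "idx_degree n (\<alpha> - \<gamma>) < k"
  using idx_set_diff[OF \<alpha>] idx_degree_diff_less[OF multi_idx_\<alpha> assms] deg_\<alpha> by simp_all

lemma correction_coeff_const:
  assumes v: "unitriangular \<alpha> v" and compat: "compatible_above x \<alpha> (Suc j) v"
    and \<gamma>: "\<gamma> \<le> \<alpha>" "idx_degree n \<gamma> = Suc j"
  shows "D \<gamma> v - x (\<alpha> - \<gamma>) \<in> K"
  unfolding const_ring_def
proof (intro CollectI allI impI)
  fix i assume i: "i < n"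
  define e where "e = (0 :: nat \<Rightarrow> nat)(i := 1)"
  have e_multi_idx: "e \<in> M" and e_nonzero: "e \<noteq> 0"
    using i by (auto simp: e_def multi_idx_def fun_eq_iff)
  have "\<gamma> \<noteq> 0"
    using \<gamma>(2) by auto
  note below = partial_descent_below[OF \<gamma>(1) this]
  have "e + \<gamma> \<le> \<alpha> \<longleftrightarrow> e \<le> \<alpha> - \<gamma>"
    using \<gamma>(1) by (auto simp: le_fun_def) (metis add.commute le_diff_conv2)+
  have "\<delta> i (D \<gamma> v) = D (e + \<gamma>) v"
    using D_add_idx D_unit[OF i] by (simp add: e_def)
  also have "\<dots> = (if e \<le> \<alpha> - \<gamma> then x (\<alpha> - \<gamma> - e) else 0)"
  proof (cases "e \<le> \<alpha> - \<gamma>")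
    case True
    then have "e + \<gamma> \<le> \<alpha>"
      using \<open>e + \<gamma> \<le> \<alpha> \<longleftrightarrow> e \<le> \<alpha> - \<gamma>\<close> by simp
    moreover have "Suc j < idx_degree n (e + \<gamma>)"
      using \<gamma>(2) idx_degree_add_unit[OF i] by (simp add: e_def)
    moreover have "\<alpha> - (e + \<gamma>) = \<alpha> - \<gamma> - e"
      by (simp add: fun_eq_iff add.commute)
    ultimately show ?thesis
      using compat True e_nonzero by (auto simp: compatible_above_def)
  next
    case False
    have "e + \<gamma> \<in> M"
      using e_multi_idx multi_idx_downward_closed[OF multi_idx_\<alpha> \<gamma>(1)] by (simp add: multi_idx_def)
    with False show ?thesis
      using D_unitriangular_not_le[OF \<alpha> _ _ v] \<open>e + \<gamma> \<le> \<alpha> \<longleftrightarrow> e \<le> \<alpha> - \<gamma>\<close> by simp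
  qed
  also have "\<dots> = \<delta> i (x (\<alpha> - \<gamma>))"
    using partial_descent_D[OF x below e_multi_idx] D_unit[OF i] by (simp add: e_def)
  finally show "\<delta> i (D \<gamma> v - x (\<alpha> - \<gamma>)) = 0"
    using additive.diff[OF derivation_additive[OF derivation[OF i]]] by simp
qed

lemma lower_comb_correction:
  "(\<And>\<gamma>. \<gamma> \<in> lower_level \<alpha> (Suc j) \<Longrightarrow> e \<gamma> \<in> K) \<Longrightarrow>
    lower_comb \<alpha> (\<Sum>\<gamma>\<in>lower_level \<alpha> (Suc j). act (e \<gamma>) (x \<gamma>))"
proof (intro lower_comb_sum lower_comb_act)
  fix \<gamma> assume \<gamma>: "\<gamma> \<in> lower_level \<alpha> (Suc j)"
  then have "\<gamma> < \<alpha>" "\<gamma> \<noteq> 0"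
    by (auto simp: lower_level_def)
  moreover have "unitriangular \<gamma> (x \<gamma>)"
    using x idx_set_downward_closed[OF \<alpha>] idx_degree_strict_mono[OF multi_idx_\<alpha>] calculation(1) deg_\<alpha>
    by (simp add: partial_descent_def order_less_imp_le)
  ultimately show "lower_comb \<alpha> (x \<gamma>)"
    by (rule unitriangular_lower_comb[OF multi_idx_\<alpha>])
qed

lemma D_correction:
  assumes e: "\<And>\<gamma>. \<gamma> \<in> lower_level \<alpha> (Suc j) \<Longrightarrow> e \<gamma> \<in> K"
    and \<gamma>': "\<gamma>' \<in> M" "Suc j \<le> idx_degree n \<gamma>'"
  shows "D \<gamma>' (\<Sum>\<gamma>\<in>lower_level \<alpha> (Suc j). act (e \<gamma>) (x \<gamma>)) =
    (if \<gamma>' \<in> lower_level \<alpha> (Suc j) then e \<gamma>' else 0)"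
proof -
  let ?L = "lower_level \<alpha> (Suc j)"
  have "finite ?L"
    using finite_multi_idx_less[OF multi_idx_\<alpha>] by (rule finite_subset[rotated]) (auto simp: lower_level_def)
  have "act (e \<gamma>) (D \<gamma>' (x \<gamma>)) = (if \<gamma> = \<gamma>' then e \<gamma>' else 0)" if \<gamma>: "\<gamma> \<in> ?L" for \<gamma>
  proof -
    have \<gamma>_less: "\<gamma> < \<alpha>" and deg_\<gamma>_eq: "idx_degree n \<gamma> = Suc j"
      using \<gamma> by (auto simp: lower_level_def)
    have \<gamma>_idx: "\<gamma> \<in> I"
      by (rule idx_set_downward_closed[OF \<alpha> order_less_imp_le[OF \<gamma>_less]])
    have deg_\<gamma>: "idx_degree n \<gamma> < k"
      using idx_degree_strict_mono[OF multi_idx_\<alpha> \<gamma>_less] deg_\<alpha> by simp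
    have "\<gamma>' \<le> \<gamma> \<longleftrightarrow> \<gamma>' = \<gamma>"
      using idx_degree_le_imp_eq[of \<gamma> n \<gamma>'] \<gamma>_idx \<gamma>' deg_\<gamma>_eq
      by (auto simp: idx_set_def)
    moreover have "x 0 = 1"
      using partial_descent_zero_idx[OF x] deg_\<gamma> by simp
    ultimately show ?thesis
      using partial_descent_D[OF x \<gamma>_idx deg_\<gamma> \<gamma>'(1)] by (auto simp: act_one_right)
  qed
  then have "D \<gamma>' (\<Sum>\<gamma>\<in>?L. act (e \<gamma>) (x \<gamma>)) = (\<Sum>\<gamma>\<in>?L. if \<gamma> = \<gamma>' then e \<gamma>' else 0)"
    by (simp add: D_sum D_act e)
  also have "\<dots> = (if \<gamma>' \<in> ?L then e \<gamma>' else 0)"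
    using \<open>finite ?L\<close> by simp
  finally show ?thesis .
qed

lemma correction_step:
  assumes v: "unitriangular \<alpha> v" and compat: "compatible_above x \<alpha> (Suc j) v"
  shows "\<exists>v'. unitriangular \<alpha> v' \<and> compatible_above x \<alpha> j v'"
proof -
  let ?L = "lower_level \<alpha> (Suc j)"
  define e where "e \<gamma> = D \<gamma> v - x (\<alpha> - \<gamma>)" for \<gamma>
  have e_const: "e \<gamma> \<in> K" if "\<gamma> \<in> ?L" for \<gamma>
    using correction_coeff_const[OF v compat] that by (auto simp: e_def lower_level_def order_less_imp_le)
  define v' where "v' = v - (\<Sum>\<gamma>\<in>?L. act (e \<gamma>) (x \<gamma>))"
  obtain s where s: "lower_comb \<alpha> s" "v = y \<alpha> + s"
    using v unfolding unitriangular_def by blast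
  have "lower_comb \<alpha> (s - (\<Sum>\<gamma>\<in>?L. act (e \<gamma>) (x \<gamma>)))"
    using s(1) lower_comb_correction[OF e_const] by (rule lower_comb_diff)
  moreover have "v' = y \<alpha> + (s - (\<Sum>\<gamma>\<in>?L. act (e \<gamma>) (x \<gamma>)))"
    by (simp add: v'_def s(2))
  ultimately have "unitriangular \<alpha> v'"
    unfolding unitriangular_def by blast
  moreover have "compatible_above x \<alpha> j v'"
    unfolding compatible_above_def
  proof (intro allI impI)
    fix \<gamma> assume \<gamma>: "\<gamma> \<le> \<alpha>" "\<gamma> \<noteq> 0" "j < idx_degree n \<gamma>"
    have \<gamma>_multi_idx: "\<gamma> \<in> M"
      using multi_idx_downward_closed[OF multi_idx_\<alpha> \<gamma>(1)] .
    have "D \<gamma> v' = D \<gamma> v - (if \<gamma> \<in> ?L then e \<gamma> else 0)"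
      using D_correction[OF e_const \<gamma>_multi_idx] \<gamma>(3) by (simp add: v'_def D_diff)
    also have "\<dots> = x (\<alpha> - \<gamma>)"
    proof (cases "\<gamma> \<in> ?L")
      case True
      then show ?thesis
        by (simp add: e_def)
    next
      case False
      then consider "Suc j < idx_degree n \<gamma>" | "\<gamma> = \<alpha>"
        using \<gamma> by (fastforce simp: lower_level_def order_less_le)
      then show ?thesis
      proof cases
        case 1
        then show ?thesis
          using compat \<gamma> False by (simp add: compatible_above_def)
      next
        case 2
        then have "x 0 = 1"
          using partial_descent_zero_idx[OF x] idx_degree_pos[OF multi_idx_\<alpha>] \<gamma>(2) deg_\<alpha> by simp
        then show ?thesis
          using 2 False D_unitriangular_self[OF \<alpha> v] by simp
      qed
    qed
    finally show "D \<gamma> v' = x (\<alpha> - \<gamma>)" .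
  qed
  ultimately show ?thesis
    by blast
qed

lemma exists_compatible_unitriangular: "\<exists>v. unitriangular \<alpha> v \<and> compatible_above x \<alpha> 0 v"
proof -
  have "\<exists>v'. unitriangular \<alpha> v' \<and> compatible_above x \<alpha> 0 v'"
    if "unitriangular \<alpha> v" "compatible_above x \<alpha> j v" for j v
    using that by (induction j arbitrary: v) (blast dest: correction_step)+
  moreover have "unitriangular \<alpha> (y \<alpha>)"
    using lower_comb_zero by (auto simp: unitriangular_def)
  moreover have "compatible_above x \<alpha> k (y \<alpha>)"
    unfolding compatible_above_def using deg_\<alpha> by (auto dest: idx_degree_mono[where n = n])
  ultimately show ?thesis
    by blast
qed

end

lemma partial_descent_extend:
  assumes x: "partial_descent k x"
  shows "\<exists>x'. partial_descent (Suc k) x'"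
proof -
  define x' where "x' \<alpha> = (if \<alpha> \<in> I \<and> idx_degree n \<alpha> = k
      then SOME v. unitriangular \<alpha> v \<and> compatible_above x \<alpha> 0 v else x \<alpha>)" for \<alpha>
  have old: "x' \<beta> = x \<beta>" if "idx_degree n \<beta> < k" for \<beta>
    using that by (simp add: x'_def)
  have "unitriangular \<alpha> (x' \<alpha>) \<and> compatible_above x' \<alpha> 0 (x' \<alpha>)"
    if \<alpha>: "\<alpha> \<in> I" "idx_degree n \<alpha> < Suc k" for \<alpha>
  proof -
    have "compatible_above x' \<alpha> 0 v \<longleftrightarrow> compatible_above x \<alpha> 0 v" for v
    proof (rule compatible_above_cong)
      fix \<gamma> assume "\<gamma> \<le> \<alpha>" "\<gamma> \<noteq> 0"
      then have "idx_degree n (\<alpha> - \<gamma>) < k"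
        using idx_degree_diff_less[of \<alpha> n \<gamma>] \<alpha> by (simp add: idx_set_def)
      then show "x' (\<alpha> - \<gamma>) = x (\<alpha> - \<gamma>)"
        by (rule old)
    qed
    moreover have "unitriangular \<alpha> (x' \<alpha>) \<and> compatible_above x \<alpha> 0 (x' \<alpha>)"
    proof (cases "idx_degree n \<alpha> = k")
      case True
      then show ?thesis
        using someI_ex[OF exists_compatible_unitriangular[OF x \<alpha>(1) True]] \<alpha>(1) by (simp add: x'_def)
    next
      case False
      then show ?thesis
        using x \<alpha> old by (simp add: partial_descent_def)
    qed
    ultimately show ?thesis
      by simp
  qed
  then show ?thesis
    unfolding partial_descent_def by blast
qed

lemma partial_descent_exists: "\<exists>x. partial_descent k x"
proof (induction k)
  case 0
  show ?case
    by (simp add: partial_descent_def)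
next
  case (Suc k)
  then show ?case
    using partial_descent_extend by blast
qed

lemma descent_iff_partial_descent:
  "descent n \<delta> I x \<and> (\<forall>\<alpha>\<in>I. \<alpha> \<noteq> 0 \<longrightarrow> unitriangular \<alpha> (x \<alpha>)) \<longleftrightarrow> (\<forall>k. partial_descent k x)"
proof
  assume "descent n \<delta> I x \<and> (\<forall>\<alpha>\<in>I. \<alpha> \<noteq> 0 \<longrightarrow> unitriangular \<alpha> (x \<alpha>))"
  then show "\<forall>k. partial_descent k x"
    using multi_idx_downward_closed unitriangular_zero_idx
    by (auto simp: descent_iff partial_descent_def compatible_above_def idx_set_def)
next
  assume x: "\<forall>k. partial_descent k x"
  then have "x 0 = 1"
    using partial_descent_zero_idx by blast
  moreover have "D \<gamma> (x \<beta>) = (if \<gamma> \<le> \<beta> then x (\<beta> - \<gamma>) else 0)" if "\<gamma> \<in> M" "\<beta> \<in> I" for \<gamma> \<beta>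
    using partial_descent_D[of "Suc (idx_degree n \<beta>)"] x that by blast
  moreover have "unitriangular \<alpha> (x \<alpha>)" if "\<alpha> \<in> I" for \<alpha>
    using x that by (auto simp: partial_descent_def)
  ultimately show "descent n \<delta> I x \<and> (\<forall>\<alpha>\<in>I. \<alpha> \<noteq> 0 \<longrightarrow> unitriangular \<alpha> (x \<alpha>))"
    by (simp add: descent_iff)
qed

theorem unique_unitriangular_descent:
  "\<exists>x. (descent n \<delta> I x \<and> (\<forall>\<alpha>\<in>I. \<alpha> \<noteq> 0 \<longrightarrow> unitriangular \<alpha> (x \<alpha>))) \<and>
     (\<forall>x'. descent n \<delta> I x' \<and> (\<forall>\<alpha>\<in>I. \<alpha> \<noteq> 0 \<longrightarrow> unitriangular \<alpha> (x' \<alpha>)) \<longrightarrow>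
       (\<forall>\<alpha>\<in>I. x' \<alpha> = x \<alpha>))"
proof -
  define X where "X \<alpha> = (SOME x. partial_descent (Suc (idx_degree n \<alpha>)) x) \<alpha>" for \<alpha>
  have X: "partial_descent (Suc (idx_degree n \<alpha>)) (SOME x. partial_descent (Suc (idx_degree n \<alpha>)) x)" for \<alpha>
    using partial_descent_exists by (rule someI_ex)
  have "partial_descent k X" for k
    unfolding partial_descent_def
  proof (intro ballI impI)
    fix \<alpha> assume \<alpha>: "\<alpha> \<in> I"
    let ?x = "SOME x. partial_descent (Suc (idx_degree n \<alpha>)) x"
    have agree: "X \<beta> = ?x \<beta>" if "\<beta> \<in> I" "idx_degree n \<beta> \<le> idx_degree n \<alpha>" for \<beta>
      unfolding X_def using partial_descent_unique[OF X X] that by simp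
    have "compatible_above X \<alpha> 0 v \<longleftrightarrow> compatible_above ?x \<alpha> 0 v" for v
      using agree idx_set_diff[OF \<alpha>] idx_degree_mono[of _ \<alpha> n]
      by (intro compatible_above_cong) (simp add: le_fun_def)
    then show "unitriangular \<alpha> (X \<alpha>) \<and> compatible_above X \<alpha> 0 (X \<alpha>)"
      using X[of \<alpha>] \<alpha> agree[OF \<alpha> order_refl] by (simp add: partial_descent_def)
  qed
  then show ?thesis
    using descent_iff_partial_descent partial_descent_unique by (metis lessI)
qed

end

theorem lemma2p3:
  fixes \<delta> :: "nat \<Rightarrow> 'a::ring_1 \<Rightarrow> 'a" and n :: nat and d :: "nat \<Rightarrow> enat"
    and y :: "(nat \<Rightarrow> nat) \<Rightarrow> 'a"
  assumes der: "\<And>i. i < n \<Longrightarrow> derivation (\<delta> i)"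
    and comm: "\<And>i j. i < n \<Longrightarrow> j < n \<Longrightarrow> \<delta> i \<circ> \<delta> j = \<delta> j \<circ> \<delta> i"
    and yN: "\<And>\<alpha>. \<alpha> \<in> idx_set n d \<Longrightarrow> y \<alpha> \<in> N_set n \<delta> \<alpha>"
    and y1: "\<And>\<alpha>. \<alpha> \<in> idx_set n d \<Longrightarrow> delta_pow n \<delta> \<alpha> (y \<alpha>) = 1"
  shows "\<exists>x. (descent n \<delta> (idx_set n d) x \<and>
            (\<forall>\<alpha>\<in>idx_set n d. \<alpha> \<noteq> (\<lambda>_. 0) \<longrightarrow>
               (\<exists>c. (\<forall>\<beta>. c \<beta> \<in> const_ring n \<delta>) \<and> c (\<lambda>_. 0) = 0 \<and>
                    x \<alpha> = y \<alpha> + (\<Sum>\<beta>\<in>{\<beta>. \<beta> < \<alpha>}. c \<beta> * y \<beta>))))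
          \<and> (\<forall>x'. (descent n \<delta> (idx_set n d) x' \<and>
            (\<forall>\<alpha>\<in>idx_set n d. \<alpha> \<noteq> (\<lambda>_. 0) \<longrightarrow>
               (\<exists>c. (\<forall>\<beta>. c \<beta> \<in> const_ring n \<delta>) \<and> c (\<lambda>_. 0) = 0 \<and>
                    x' \<alpha> = y \<alpha> + (\<Sum>\<beta>\<in>{\<beta>. \<beta> < \<alpha>}. c \<beta> * y \<beta>))))
              \<longrightarrow> (\<forall>\<alpha>\<in>idx_set n d. x' \<alpha> = x \<alpha>))
        \<and> (\<exists>z. (descent n \<delta> (idx_set n d) z \<and>
            (\<forall>\<alpha>\<in>idx_set n d. \<alpha> \<noteq> (\<lambda>_. 0) \<longrightarrow>
               (\<exists>b. (\<forall>\<beta>. b \<beta> \<in> const_ring n \<delta>) \<and> b (\<lambda>_. 0) = 0 \<and>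
                    z \<alpha> = y \<alpha> + (\<Sum>\<beta>\<in>{\<beta>. \<beta> < \<alpha>}. y \<beta> * b \<beta>))))
          \<and> (\<forall>z'. (descent n \<delta> (idx_set n d) z' \<and>
            (\<forall>\<alpha>\<in>idx_set n d. \<alpha> \<noteq> (\<lambda>_. 0) \<longrightarrow>
               (\<exists>b. (\<forall>\<beta>. b \<beta> \<in> const_ring n \<delta>) \<and> b (\<lambda>_. 0) = 0 \<and>
                    z' \<alpha> = y \<alpha> + (\<Sum>\<beta>\<in>{\<beta>. \<beta> < \<alpha>}. y \<beta> * b \<beta>))))
              \<longrightarrow> (\<forall>\<alpha>\<in>idx_set n d. z' \<alpha> = z \<alpha>)))"
proof -
  interpret commuting_derivations n \<delta>
    using der comm by unfold_locales
  interpret left: descent_data n \<delta> d y "(*)" "(*)"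
    by unfold_locales
      (auto simp: yN y1 algebra_simps const_mult const_ring_def der derivation_mult_const_left)
  interpret right: descent_data n \<delta> d y "\<lambda>c a. a * c" "\<lambda>c c'. c' * c"
    by unfold_locales
      (auto simp: yN y1 algebra_simps const_mult const_ring_def der derivation_mult_const_right)
  show ?thesis
    using conjI[OF left.unique_unitriangular_descent right.unique_unitriangular_descent]
    unfolding left.unitriangular_iff right.unitriangular_iff zero_fun_def by blast
qed

end
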